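(* Consider the one-stage ANC game described in the context. Suppose that for every $x\in\mathbb{R}^n$ and $a\in\mathcal{A}$ the functions $u\mapsto\Sigma(F(x,0),u,a)$ and $u\mapsto\Sigma(F(x,u),u,a)$ are continuous, coercive and convex on $\mathbb{R}^m$, and that for every $x\in\mathbb{R}^n$, $s\in\mathcal{F}$ the function $H(u)\triangleq h^{x,s}(u)=[h^{x,s}_1(u),\dots,h^{x,s}_N(u)]'$ satisfies: there exist $u^*\in\mathbb{R}^m$ and a set $\mathcal{G}\subset\mathcal{A}$ with $|\mathcal{G}|\ge2$ such that (a) $H_i(u^* )=\max_{1\le j\le N}H_j(u^* )$ for all $i\in\mathcal{G}$; (b) for all $u\ne u^*$ there exists $i\in\mathcal{G}$ with $H_i(u)>H_i(u^* )$; (c) $u^*$ is not a minimum of any $H_i$, $i\in\mathcal{G}$. Then the one-stage ANC game has a non-pure saddle point $(u^*,p^* )$.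
   Context: Setting (one-stage ANC game). Let $\mathcal{F}=\{1,\dots,|\mathcal{F}|\}$ be a finite set of transmission regimes and $\mathcal{A}=\{1,\dots,N\}$ a finite set of jammer actions. For each $a\in\mathcal{A}$ let $P(a)$ be an $|\mathcal{F}|\times|\mathcal{F}|$ row-stochastic matrix, and let $q=(q_1,\dots,q_{|\mathcal{F}|})'\in[0,1]^{|\mathcal{F}|}$. Let $F:\mathbb{R}^n\times\mathbb{R}^m\to\mathbb{R}^n$, $\sigma^0:\mathbb{R}^n\times\mathbb{R}^m\to\mathbb{R}$, $\sigma^1:\mathbb{R}^n\to\mathbb{R}$, $g^0:\mathcal{A}\times\mathcal{F}\to\mathbb{R}$. For a plant state $x$ and regime $s$, the controller chooses $u\in\mathbb{R}^m$, the jammer chooses $p\in\mathcal{S}_{N-1}$ (unit simplex in $\mathbb{R}^N$); $a$ is drawn according to $p$, $s^+$ with $\mathrm{Pr}(s^+=i)=P_{si}(a)$, $b\in\{0,1\}$ with $\mathrm{Pr}(b=1\mid s^+)=q_{s^+}$, and $x^+=F(x,bu)$. Payoff $\Sigma(x^+,u,a)=\sigma^0(x,u)+\sigma^1(x^+)-g^0(a,s)$, with expectation $p'h^{x,s}(u)$ where $h^{x,s}_i(u)=(P(i)q)_s\Sigma(F(x,u),u,i)+(1-(P(i)q)_s)\Sigma(F(x,0),u,i)$. A saddle point is $(u^*,p^* )\in\mathbb{R}^m\times\mathcal{S}_{N-1}$ with $p'h^{x,s}(u^* )\le(p^* )'h^{x,s}(u^* )\le(p^* )'h^{x,s}(u)$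 for all $u,p$ (hence $(p^* )'h^{x,s}(u^* )=\inf_u\sup_pp'h^{x,s}(u)=\sup_p\inf_up'h^{x,s}(u)$). It is non-pure if $p^*$ has at least two positive components. A function $h:\mathbb{R}^m\to\mathbb{R}$ is coercive if $h(u)\ge\eta(\|u\|)$ for some $\eta$ with $\eta(y)\to+\infty$ as $y\to+\infty$. *)

theory Defs
  imports "HOL-Analysis.Analysis"
begin

text \<open>Regimes are \<open>{1..K}\<close>, jammer actions are \<open>{1..N}\<close>.
  \<open>P a s i\<close> is the \<open>(s,i)\<close> entry of the matrix \<open>P(a)\<close>; \<open>q i\<close> is \<open>q_i\<close>.\<close>

definition coercive :: "('a::real_normed_vector \<Rightarrow> real) \<Rightarrow> bool" where
  "coercive h \<longleftrightarrow> (\<exists>\<eta>::real \<Rightarrow> real. filterlim \<eta> at_top at_top \<and> (\<forall>u. \<eta> (norm u) \<le> h u))"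

definition unit_simplex :: "nat \<Rightarrow> (nat \<Rightarrow> real) set" where
  "unit_simplex N = {p. (\<forall>i\<in>{1..N}. 0 \<le> p i) \<and> (\<Sum>i=1..N. p i) = 1}"

definition row_stochastic :: "nat \<Rightarrow> (nat \<Rightarrow> nat \<Rightarrow> real) \<Rightarrow> bool" where
  "row_stochastic K M \<longleftrightarrow>
     (\<forall>s\<in>{1..K}. (\<forall>i\<in>{1..K}. 0 \<le> M s i) \<and> (\<Sum>i=1..K. M s i) = 1)"

definition anc_Sigma ::
  "('x \<Rightarrow> 'u \<Rightarrow> real) \<Rightarrow> ('x \<Rightarrow> real) \<Rightarrow> (nat \<Rightarrow> nat \<Rightarrow> real)
   \<Rightarrow> 'x \<Rightarrow> nat \<Rightarrow> 'x \<Rightarrow> 'u \<Rightarrow> nat \<Rightarrow> real" where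
  "anc_Sigma \<sigma>0 \<sigma>1 g0 x s xp u a = \<sigma>0 x u + \<sigma>1 xp - g0 a s"

definition anc_Pq :: "nat \<Rightarrow> (nat \<Rightarrow> nat \<Rightarrow> nat \<Rightarrow> real) \<Rightarrow> (nat \<Rightarrow> real) \<Rightarrow> nat \<Rightarrow> nat \<Rightarrow> real" where
  "anc_Pq K P q a s = (\<Sum>i=1..K. P a s i * q i)"

definition anc_h ::
  "nat \<Rightarrow> (nat \<Rightarrow> nat \<Rightarrow> nat \<Rightarrow> real) \<Rightarrow> (nat \<Rightarrow> real)
   \<Rightarrow> ('x \<Rightarrow> 'u::zero \<Rightarrow> 'x) \<Rightarrow> ('x \<Rightarrow> 'u \<Rightarrow> real) \<Rightarrow> ('x \<Rightarrow> real) \<Rightarrow> (nat \<Rightarrow> nat \<Rightarrow> real)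
   \<Rightarrow> 'x \<Rightarrow> nat \<Rightarrow> nat \<Rightarrow> 'u \<Rightarrow> real" where
  "anc_h K P q Fd \<sigma>0 \<sigma>1 g0 x s a u =
     anc_Pq K P q a s * anc_Sigma \<sigma>0 \<sigma>1 g0 x s (Fd x u) u a
     + (1 - anc_Pq K P q a s) * anc_Sigma \<sigma>0 \<sigma>1 g0 x s (Fd x 0) u a"

definition exp_payoff :: "nat \<Rightarrow> (nat \<Rightarrow> 'u \<Rightarrow> real) \<Rightarrow> (nat \<Rightarrow> real) \<Rightarrow> 'u \<Rightarrow> real" where
  "exp_payoff N H p u = (\<Sum>i=1..N. p i * H i u)"

definition saddle_point :: "nat \<Rightarrow> (nat \<Rightarrow> 'u \<Rightarrow> real) \<Rightarrow> 'u \<Rightarrow> (nat \<Rightarrow> real) \<Rightarrow> bool" where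
  "saddle_point N H us ps \<longleftrightarrow> ps \<in> unit_simplex N \<and>
     (\<forall>p\<in>unit_simplex N. \<forall>u. exp_payoff N H p us \<le> exp_payoff N H ps us
                              \<and> exp_payoff N H ps us \<le> exp_payoff N H ps u)"

definition non_pure :: "nat \<Rightarrow> (nat \<Rightarrow> real) \<Rightarrow> bool" where
  "non_pure N p \<longleftrightarrow> (\<exists>i\<in>{1..N}. \<exists>j\<in>{1..N}. i \<noteq> j \<and> 0 < p i \<and> 0 < p j)"

end

theory Submission
  imports Defs
begin

text \<open>Shift the components in \<open>G\<close> by \<open>M = max\<^sub>j H\<^sub>j(u*)\<close>. By (a) and (b) the convex
  functions \<open>H\<^sub>i - M\<close>, \<open>i \<in> G\<close>, are never all negative at the same point, so by the
  theorem of the alternative of Fan, Glicksberg and Hoffman some convex combination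
  \<open>\<Sum>\<^sub>i \<lambda>\<^sub>i (H\<^sub>i - M)\<close> is nonnegative everywhere. The jammer strategy \<open>p* = \<lambda>\<close> then
  makes \<open>u*\<close> a best response with value \<open>M\<close>, and \<open>M\<close> is also the best the jammer can get
  against \<open>u*\<close>; condition (c) prevents \<open>\<lambda>\<close> from sitting on a single action. The theorem of the
  alternative is proved by induction on \<open>|G|\<close>, the case of two functions being a
  separating hyperplane argument in the plane.\<close>

lemma nonneg_of_nonneg_on_pos_ray:
  fixes c k :: real
  assumes ray: "\<And>t. 0 < t \<Longrightarrow> 0 \<le> c + t * k"
  shows "0 \<le> c" and "0 \<le> k"
proof -
  show "0 \<le> c"
  proof (rule ccontr)
    assume "\<not> 0 \<le> c"
    define t where "t = - c / (\<bar>k\<bar> + 1)"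
    have "0 < t" using \<open>\<not> 0 \<le> c\<close> by (simp add: t_def divide_less_0_iff add_nonneg_pos)
    have "c + t * k \<le> c + t * \<bar>k\<bar>" using \<open>0 < t\<close> by (simp add: mult_left_mono)
    also have "\<dots> = c / (\<bar>k\<bar> + 1)" by (simp add: t_def field_simps)
    also have "\<dots> < 0" using \<open>\<not> 0 \<le> c\<close> by (simp add: divide_less_0_iff add_nonneg_pos)
    finally show False using ray[OF \<open>0 < t\<close>] by linarith
  qed
  show "0 \<le> k"
  proof (rule ccontr)
    assume "\<not> 0 \<le> k"
    define t where "t = (\<bar>c\<bar> + 1) / - k"
    have "0 < t" using \<open>\<not> 0 \<le> k\<close> by (simp add: t_def divide_less_0_iff add_nonneg_pos)
    have "c + t * k = c - \<bar>c\<bar> - 1" using \<open>\<not> 0 \<le> k\<close> by (simp add: t_def field_simps)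
    then show False using ray[OF \<open>0 < t\<close>] by linarith
  qed
qed

lemma fan_glicksberg_hoffman_pair:
  fixes f g :: "'a::real_vector \<Rightarrow> real"
  assumes f: "convex_on S f" and g: "convex_on S g"
    and infeasible: "\<And>u. u \<in> S \<Longrightarrow> 0 \<le> f u \<or> 0 \<le> g u"
  shows "\<exists>\<mu>\<in>{0..1}. \<forall>u\<in>S. 0 \<le> \<mu> * f u + (1 - \<mu>) * g u"
proof (cases "S = {}")
  case True
  then show ?thesis by auto
next
  case False
  then obtain u0 where "u0 \<in> S" by blast
  \<comment> \<open>The open upper image of \<open>(f, g)\<close> is convex and misses the origin; a supporting line
    through the origin yields the weights.\<close>
  define D where "D = {y :: real \<times> real. \<exists>u\<in>S. f u < fst y \<and> g u < snd y}"
  have D_memI: "(y1, y2) \<in> D" if "u \<in> S" "f u < y1" "g u < y2" for u y1 y2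
    using that by (auto simp: D_def)
  have "convex D"
    unfolding convex_def
  proof (intro ballI allI impI)
    fix y z :: "real \<times> real" and s t :: real
    assume "y \<in> D" "z \<in> D" "0 \<le> s" "0 \<le> t" "s + t = 1"
    then obtain u v where uv: "u \<in> S" "f u < fst y" "g u < snd y" "v \<in> S" "f v < fst z" "g v < snd z"
      by (auto simp: D_def)
    have "convex S" using f by (simp add: convex_on_def)
    then have "s *\<^sub>R u + t *\<^sub>R v \<in> S"
      using uv \<open>0 \<le> s\<close> \<open>0 \<le> t\<close> \<open>s + t = 1\<close> by (simp add: convexD)
    moreover have "h (s *\<^sub>R u + t *\<^sub>R v) < s * a + t * b"
      if "convex_on S h" "h u < a" "h v < b" for h a b
    proof -
      have "s * (h u - a) + t * (h v - b) < 0"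
        using that \<open>0 \<le> s\<close> \<open>0 \<le> t\<close> \<open>s + t = 1\<close> by (intro convex_bound_lt) auto
      moreover have "h (s *\<^sub>R u + t *\<^sub>R v) \<le> s * h u + t * h v"
        using that(1) uv \<open>0 \<le> s\<close> \<open>0 \<le> t\<close> \<open>s + t = 1\<close> by (simp add: convex_on_def)
      ultimately show ?thesis by (simp add: algebra_simps)
    qed
    ultimately show "s *\<^sub>R y + t *\<^sub>R z \<in> D"
      using f g uv D_memI[of "s *\<^sub>R u + t *\<^sub>R v"] by (cases y, cases z) simp
  qed
  moreover have "0 \<notin> D"
    using infeasible by (force simp: D_def zero_prod_def)
  ultimately obtain \<alpha> \<beta> where "(\<alpha>, \<beta>) \<noteq> 0"
    and sep: "\<And>y1 y2. (y1, y2) \<in> D \<Longrightarrow> 0 \<le> \<alpha> * y1 + \<beta> * y2"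
    using separating_hyperplane_set_0 by (metis inner_Pair inner_real_def surj_pair)
  have "0 \<le> \<alpha>"
  proof (rule nonneg_of_nonneg_on_pos_ray(2))
    fix t :: real assume "0 < t"
    have "0 \<le> \<alpha> * (f u0 + 1 + t) + \<beta> * (g u0 + 1)"
      using \<open>0 < t\<close> \<open>u0 \<in> S\<close> by (intro sep D_memI) auto
    then show "0 \<le> (\<alpha> * (f u0 + 1) + \<beta> * (g u0 + 1)) + t * \<alpha>"
      by (simp add: algebra_simps)
  qed
  have "0 \<le> \<beta>"
  proof (rule nonneg_of_nonneg_on_pos_ray(2))
    fix t :: real assume "0 < t"
    have "0 \<le> \<alpha> * (f u0 + 1) + \<beta> * (g u0 + 1 + t)"
      using \<open>0 < t\<close> \<open>u0 \<in> S\<close> by (intro sep D_memI) auto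
    then show "0 \<le> (\<alpha> * (f u0 + 1) + \<beta> * (g u0 + 1)) + t * \<beta>"
      by (simp add: algebra_simps)
  qed
  have comb: "0 \<le> \<alpha> * f u + \<beta> * g u" if "u \<in> S" for u
  proof (rule nonneg_of_nonneg_on_pos_ray(1))
    fix t :: real assume "0 < t"
    have "0 \<le> \<alpha> * (f u + t) + \<beta> * (g u + t)"
      using \<open>0 < t\<close> \<open>u \<in> S\<close> by (intro sep D_memI) auto
    then show "0 \<le> (\<alpha> * f u + \<beta> * g u) + t * (\<alpha> + \<beta>)"
      by (simp add: algebra_simps)
  qed
  have "0 < \<alpha> + \<beta>"
    using \<open>(\<alpha>, \<beta>) \<noteq> 0\<close> \<open>0 \<le> \<alpha>\<close> \<open>0 \<le> \<beta>\<close> by (auto simp: zero_prod_def)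
  show ?thesis
  proof (intro bexI ballI)
    fix u assume "u \<in> S"
    have "1 - \<alpha> / (\<alpha> + \<beta>) = \<beta> / (\<alpha> + \<beta>)"
      using \<open>0 < \<alpha> + \<beta>\<close> by (simp add: field_simps)
    then have "\<alpha> / (\<alpha> + \<beta>) * f u + (1 - \<alpha> / (\<alpha> + \<beta>)) * g u = (\<alpha> * f u + \<beta> * g u) / (\<alpha> + \<beta>)"
      by (simp add: add_divide_distrib)
    then show "0 \<le> \<alpha> / (\<alpha> + \<beta>) * f u + (1 - \<alpha> / (\<alpha> + \<beta>)) * g u"
      using comb[OF \<open>u \<in> S\<close>] \<open>0 < \<alpha> + \<beta>\<close> by simp
  next
    show "\<alpha> / (\<alpha> + \<beta>) \<in> {0..1}"
      using \<open>0 \<le> \<alpha>\<close> \<open>0 \<le> \<beta>\<close> \<open>0 < \<alpha> + \<beta>\<close> by simp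
  qed
qed

lemma convex_on_Max:
  fixes f :: "'i \<Rightarrow> 'a::real_vector \<Rightarrow> real"
  assumes "finite I" "I \<noteq> {}" "\<And>i. i \<in> I \<Longrightarrow> convex_on S (f i)"
  shows "convex_on S (\<lambda>u. Max ((\<lambda>i. f i u) ` I))"
proof (rule convex_onI)
  show "convex S"
    using assms(2,3) by (auto simp: convex_on_def)
next
  fix t :: real and x y :: 'a
  assume "0 < t" "t < 1" "x \<in> S" "y \<in> S"
  have "f i ((1 - t) *\<^sub>R x + t *\<^sub>R y) \<le> (1 - t) * Max ((\<lambda>i. f i x) ` I) + t * Max ((\<lambda>i. f i y) ` I)"
    if "i \<in> I" for i
  proof -
    have "f i ((1 - t) *\<^sub>R x + t *\<^sub>R y) \<le> (1 - t) * f i x + t * f i y"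
      using convex_onD[OF assms(3)[OF that]] \<open>0 < t\<close> \<open>t < 1\<close> \<open>x \<in> S\<close> \<open>y \<in> S\<close> by simp
    also have "\<dots> \<le> (1 - t) * Max ((\<lambda>i. f i x) ` I) + t * Max ((\<lambda>i. f i y) ` I)"
      using \<open>0 < t\<close> \<open>t < 1\<close> \<open>finite I\<close> that by (intro add_mono mult_left_mono) auto
    finally show ?thesis .
  qed
  then show "Max ((\<lambda>i. f i ((1 - t) *\<^sub>R x + t *\<^sub>R y)) ` I)
      \<le> (1 - t) * Max ((\<lambda>i. f i x) ` I) + t * Max ((\<lambda>i. f i y) ` I)"
    using assms(1,2) by simp
qed

theorem fan_glicksberg_hoffman:
  fixes f :: "'i \<Rightarrow> 'a::real_vector \<Rightarrow> real"
  assumes "finite I" "I \<noteq> {}"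
    and convex: "\<And>i. i \<in> I \<Longrightarrow> convex_on S (f i)"
    and infeasible: "\<And>u. u \<in> S \<Longrightarrow> \<exists>i\<in>I. 0 \<le> f i u"
  shows "\<exists>l. (\<forall>i\<in>I. 0 \<le> l i) \<and> sum l I = 1 \<and> (\<forall>u\<in>S. 0 \<le> (\<Sum>i\<in>I. l i * f i u))"
  using assms
proof (induction I arbitrary: f rule: finite_ne_induct)
  case (singleton j)
  then show ?case
    by (intro exI[of _ "\<lambda>_. 1"]) auto
next
  case (insert j I)
  \<comment> \<open>Apply the two-function case to \<open>max\<^sub>i\<^sub>\<in>\<^sub>I f\<^sub>i\<close> and \<open>f\<^sub>j\<close>, then the induction hypothesis
    to the mixtures \<open>\<mu> f\<^sub>i + (1 - \<mu>) f\<^sub>j\<close>.\<close>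
  define g where "g u = Max ((\<lambda>i. f i u) ` I)" for u
  have "convex_on S g"
    unfolding g_def using insert.hyps insert.prems(1) by (intro convex_on_Max) auto
  moreover have "0 \<le> g u \<or> 0 \<le> f j u" if "u \<in> S" for u
    using insert.prems(2)[OF that] insert.hyps(1,2) by (auto simp: g_def Max_ge_iff)
  ultimately obtain \<mu> where \<mu>: "\<mu> \<in> {0..1}" "\<And>u. u \<in> S \<Longrightarrow> 0 \<le> \<mu> * g u + (1 - \<mu>) * f j u"
    using fan_glicksberg_hoffman_pair[of S g "f j"] insert.prems(1) by blast
  define h where "h i u = \<mu> * f i u + (1 - \<mu>) * f j u" for i u
  have "\<exists>i\<in>I. 0 \<le> h i u" if "u \<in> S" for u
  proof -
    have "g u \<in> (\<lambda>i. f i u) ` I"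
      unfolding g_def using insert.hyps(1,2) by (intro Max_in) auto
    then obtain i where "i \<in> I" "g u = f i u"
      by blast
    then show ?thesis
      using \<mu>(2)[OF that] unfolding h_def by auto
  qed
  moreover have "convex_on S (h i)" if "i \<in> I" for i
    unfolding h_def using \<mu>(1) insert.prems(1) that by (intro convex_on_add convex_on_cmul) auto
  ultimately obtain l where l: "\<forall>i\<in>I. 0 \<le> l i" "sum l I = 1" "\<forall>u\<in>S. 0 \<le> (\<Sum>i\<in>I. l i * h i u)"
    using insert.IH[of h] by blast
  define l' where "l' = (\<lambda>i. \<mu> * l i)(j := 1 - \<mu>)"
  have l'_I: "l' i = \<mu> * l i" if "i \<in> I" for i
    using insert.hyps(3) that by (auto simp: l'_def)
  have "(\<Sum>i\<in>insert j I. l' i * f i u) = (\<Sum>i\<in>I. l i * h i u)" for u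
  proof -
    have "(\<Sum>i\<in>insert j I. l' i * f i u) = (1 - \<mu>) * f j u + \<mu> * (\<Sum>i\<in>I. l i * f i u)"
      using insert.hyps(1,3) l'_I by (simp add: l'_def sum_distrib_left mult.assoc)
    also have "\<dots> = (\<Sum>i\<in>I. l i * h i u)"
      using l(2) by (simp add: h_def distrib_left sum.distrib sum_distrib_left mult.left_commute
          flip: sum_distrib_right)
    finally show ?thesis .
  qed
  moreover have "sum l' (insert j I) = 1"
    using insert.hyps(1,3) l(2) l'_I by (simp add: l'_def flip: sum_distrib_left)
  moreover have "\<forall>i\<in>insert j I. 0 \<le> l' i"
    using l(1) \<mu>(1) l'_I by (auto simp: l'_def)
  ultimately show ?case
    using l(3) by metis
qed

lemma two_positive_weights_if_no_nonneg_member: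
  fixes f :: "'i \<Rightarrow> 'a \<Rightarrow> real"
  assumes "finite G" "\<forall>i\<in>G. 0 \<le> l i" "sum l G = 1"
    and combination: "\<And>u. 0 \<le> (\<Sum>i\<in>G. l i * f i u)"
    and negative: "\<And>i. i \<in> G \<Longrightarrow> \<exists>u. f i u < 0"
  shows "\<exists>i\<in>G. \<exists>j\<in>G. i \<noteq> j \<and> 0 < l i \<and> 0 < l j"
proof (rule ccontr)
  assume single: "\<not> ?thesis"
  have "\<not> (\<forall>i\<in>G. l i = 0)"
    using \<open>sum l G = 1\<close> sum.neutral[of G l] by linarith
  then obtain i where "i \<in> G" "0 < l i"
    using assms(2) by (auto simp: order.order_iff_strict)
  then have "l j = 0" if "j \<in> G - {i}" for j
    using single assms(2) that by force
  then have concentrated: "(\<Sum>j\<in>G. l j * X j) = l i * X i" for X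
    using \<open>finite G\<close> \<open>i \<in> G\<close> by (subst sum.mono_neutral_cong_right[of G "{i}"]) auto
  have "l i = 1"
    using concentrated[of "\<lambda>_. 1"] \<open>sum l G = 1\<close> by simp
  then have "0 \<le> f i u" for u
    using combination[of u] concentrated[of "\<lambda>j. f j u"] by simp
  then show False
    using negative[OF \<open>i \<in> G\<close>] by (meson not_le)
qed

lemma exp_payoff_le_Max:
  assumes "p \<in> unit_simplex N"
  shows "exp_payoff N H p u \<le> Max ((\<lambda>j. H j u) ` {1..N})"
proof -
  have "exp_payoff N H p u \<le> (\<Sum>i=1..N. p i * Max ((\<lambda>j. H j u) ` {1..N}))"
    using assms unfolding exp_payoff_def unit_simplex_def by (intro sum_mono mult_left_mono) auto
  also have "\<dots> = Max ((\<lambda>j. H j u) ` {1..N})"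
    using assms by (simp add: unit_simplex_def flip: sum_distrib_right)
  finally show ?thesis .
qed

lemma saddle_pointI_Max:
  assumes "ps \<in> unit_simplex N"
    and "exp_payoff N H ps us = Max ((\<lambda>j. H j us) ` {1..N})"
    and "\<And>u. exp_payoff N H ps us \<le> exp_payoff N H ps u"
  shows "saddle_point N H us ps"
  using assms exp_payoff_le_Max[of _ N H us] by (simp add: saddle_point_def)

lemma exp_payoff_restrict:
  assumes "G \<subseteq> {1..N}"
  shows "exp_payoff N H (\<lambda>i. if i \<in> G then l i else 0) u = (\<Sum>i\<in>G. l i * H i u)"
  using assms unfolding exp_payoff_def by (intro sum.mono_neutral_cong_right) auto

theorem non_pure_saddle_point_exists:
  fixes H :: "nat \<Rightarrow> 'a::real_vector \<Rightarrow> real"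
  assumes G: "G \<subseteq> {1..N}" "G \<noteq> {}"
    and convex: "\<And>i. i \<in> G \<Longrightarrow> convex_on UNIV (H i)"
    and maximal: "\<And>i. i \<in> G \<Longrightarrow> H i us = Max ((\<lambda>j. H j us) ` {1..N})"
    and unique: "\<And>u. u \<noteq> us \<Longrightarrow> \<exists>i\<in>G. H i us < H i u"
    and not_min: "\<And>i. i \<in> G \<Longrightarrow> \<exists>u. H i u < H i us"
  shows "\<exists>ps. saddle_point N H us ps \<and> non_pure N ps"
proof -
  define M where "M = Max ((\<lambda>j. H j us) ` {1..N})"
  have "finite G"
    using G(1) finite_subset by blast
  have "\<exists>i\<in>G. 0 \<le> H i u - M" for u
  proof (cases "u = us")
    case True
    then show ?thesis using G(2) maximal by (auto simp: M_def)
  next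
    case False
    then show ?thesis using unique maximal by (force simp: M_def)
  qed
  moreover have "convex_on UNIV (\<lambda>u. H i u - M)" if "i \<in> G" for i
    using convex_on_add[OF convex[OF that] convex_on_const[of UNIV "- M", THEN iffD2]] by simp
  ultimately obtain l where l: "\<forall>i\<in>G. 0 \<le> l i" "sum l G = 1" "\<And>u. 0 \<le> (\<Sum>i\<in>G. l i * (H i u - M))"
    using fan_glicksberg_hoffman[OF \<open>finite G\<close> G(2), of UNIV "\<lambda>i u. H i u - M"] by auto
  define ps where "ps = (\<lambda>i. if i \<in> G then l i else 0)"
  have payoff: "exp_payoff N H ps u = (\<Sum>i\<in>G. l i * (H i u - M)) + M" for u
    using exp_payoff_restrict[OF G(1), of H l u] l(2)
    by (simp add: ps_def right_diff_distrib sum_subtractf flip: sum_distrib_right)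
  have "ps \<in> unit_simplex N"
    using exp_payoff_restrict[OF G(1), of "\<lambda>_ _. 1" l] l(1,2)
    by (auto simp: unit_simplex_def exp_payoff_def ps_def)
  moreover have "exp_payoff N H ps us = M"
    using maximal by (simp add: payoff M_def)
  ultimately have "saddle_point N H us ps"
    using l(3) payoff by (intro saddle_pointI_Max) (simp_all add: M_def)
  moreover have "non_pure N ps"
  proof -
    have "\<exists>u. H i u - M < 0" if "i \<in> G" for i
      using not_min[OF that] maximal[OF that] by (auto simp: M_def)
    then obtain i j where "i \<in> G" "j \<in> G" "i \<noteq> j" "0 < l i" "0 < l j"
      using two_positive_weights_if_no_nonneg_member[where f = "\<lambda>i u. H i u - M", OF \<open>finite G\<close> l]
      by blast
    then show ?thesis
      using G(1) by (force simp: non_pure_def ps_def)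
  qed
  ultimately show ?thesis
    by blast
qed

lemma anc_Pq_bounds:
  assumes "row_stochastic K (P a)" "\<forall>i\<in>{1..K}. 0 \<le> q i \<and> q i \<le> 1" "s \<in> {1..K}"
  shows "anc_Pq K P q a s \<in> {0..1}"
proof -
  have P: "\<forall>i\<in>{1..K}. 0 \<le> P a s i" "(\<Sum>i=1..K. P a s i) = 1"
    using assms(1,3) unfolding row_stochastic_def by auto
  have "0 \<le> anc_Pq K P q a s"
    unfolding anc_Pq_def using P(1) assms(2) by (intro sum_nonneg) auto
  moreover have "anc_Pq K P q a s \<le> (\<Sum>i=1..K. P a s i)"
    unfolding anc_Pq_def using P(1) assms(2) by (intro sum_mono) (auto intro: mult_left_le)
  ultimately show ?thesis
    using P(2) by simp
qed

lemma convex_on_anc_h: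
  assumes "row_stochastic K (P a)" "\<forall>i\<in>{1..K}. 0 \<le> q i \<and> q i \<le> 1" "s \<in> {1..K}"
    and "convex_on S (\<lambda>u. anc_Sigma \<sigma>0 \<sigma>1 g0 x s (Fd x u) u a)"
    and "convex_on S (\<lambda>u. anc_Sigma \<sigma>0 \<sigma>1 g0 x s (Fd x 0) u a)"
  shows "convex_on S (anc_h K P q Fd \<sigma>0 \<sigma>1 g0 x s a)"
  using assms anc_Pq_bounds[of K P a q s] unfolding anc_h_def
  by (intro convex_on_add convex_on_cmul) auto

theorem theorem2:
  fixes K N :: nat
    and P :: "nat \<Rightarrow> nat \<Rightarrow> nat \<Rightarrow> real"
    and q :: "nat \<Rightarrow> real"
    and Fd :: "real^'n \<Rightarrow> real^'m \<Rightarrow> real^'n"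
    and \<sigma>0 :: "real^'n \<Rightarrow> real^'m \<Rightarrow> real"
    and \<sigma>1 :: "real^'n \<Rightarrow> real"
    and g0 :: "nat \<Rightarrow> nat \<Rightarrow> real"
  assumes K: "1 \<le> K" and N: "1 \<le> N"
    and P: "\<forall>a\<in>{1..N}. row_stochastic K (P a)"
    and q: "\<forall>i\<in>{1..K}. 0 \<le> q i \<and> q i \<le> 1"
    and reg0: "\<forall>x s a. s \<in> {1..K} \<longrightarrow> a \<in> {1..N} \<longrightarrow>
       (let f = (\<lambda>u. anc_Sigma \<sigma>0 \<sigma>1 g0 x s (Fd x 0) u a) in
          continuous_on UNIV f \<and> coercive f \<and> convex_on UNIV f)"
    and reg1: "\<forall>x s a. s \<in> {1..K} \<longrightarrow> a \<in> {1..N} \<longrightarrow>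
       (let f = (\<lambda>u. anc_Sigma \<sigma>0 \<sigma>1 g0 x s (Fd x u) u a) in
          continuous_on UNIV f \<and> coercive f \<and> convex_on UNIV f)"
    and Hcond: "\<forall>x. \<forall>s\<in>{1..K}. let H = anc_h K P q Fd \<sigma>0 \<sigma>1 g0 x s in
       \<exists>us G. G \<subseteq> {1..N} \<and> 2 \<le> card G
         \<and> (\<forall>i\<in>G. H i us = Max ((\<lambda>j. H j us) ` {1..N}))
         \<and> (\<forall>u. u \<noteq> us \<longrightarrow> (\<exists>i\<in>G. H i u > H i us))
         \<and> (\<forall>i\<in>G. \<not> (\<forall>u. H i us \<le> H i u))"
  shows "\<forall>x. \<forall>s\<in>{1..K}. let H = anc_h K P q Fd \<sigma>0 \<sigma>1 g0 x s in
       \<exists>us ps. saddle_point N H us ps \<and> non_pure N ps"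
proof (intro allI ballI)
  fix x s
  assume s: "s \<in> {1..K}"
  define H where "H = anc_h K P q Fd \<sigma>0 \<sigma>1 g0 x s"
  have convex: "convex_on UNIV (H a)" if "a \<in> {1..N}" for a
    using reg0[rule_format, OF s that, where x = x] reg1[rule_format, OF s that, where x = x]
      P q s that unfolding H_def Let_def by (intro convex_on_anc_h) auto
  obtain us G where G: "G \<subseteq> {1..N}" "2 \<le> card G"
    and maximal: "\<forall>i\<in>G. H i us = Max ((\<lambda>j. H j us) ` {1..N})"
    and unique: "\<forall>u. u \<noteq> us \<longrightarrow> (\<exists>i\<in>G. H i u > H i us)"
    and not_min: "\<forall>i\<in>G. \<not> (\<forall>u. H i us \<le> H i u)"
    using Hcond[rule_format, OF s, where x = x] unfolding Let_def H_def[symmetric] by blast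
  have "G \<noteq> {}"
    using G(2) by auto
  have "\<exists>ps. saddle_point N H us ps \<and> non_pure N ps"
  proof (rule non_pure_saddle_point_exists[OF G(1) \<open>G \<noteq> {}\<close>])
    show "convex_on UNIV (H i)" if "i \<in> G" for i
      using G(1) convex that by blast
    show "H i us = Max ((\<lambda>j. H j us) ` {1..N})" if "i \<in> G" for i
      using maximal that by blast
    show "\<exists>i\<in>G. H i us < H i u" if "u \<noteq> us" for u
      using unique that by blast
    show "\<exists>u. H i u < H i us" if "i \<in> G" for i
      using not_min that by (meson not_le)
  qed
  then have "\<exists>us ps. saddle_point N H us ps \<and> non_pure N ps"
    by (rule exI)
  then show "let H = anc_h K P q Fd \<sigma>0 \<sigma>1 g0 x s in \<exists>us ps. saddle_point N H us ps \<and> non_pure N ps"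
    unfolding H_def Let_def .
qed

end
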